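(* Assume the standing setting below. Let $\alpha\in(0,1/6]$, $\gamma\in(\alpha,1-2\alpha]$ with $\alpha n,\gamma n$ integers, let $P_1,P_2,P_3\subseteq X$ be pairwise disjoint with $|P_1|=|P_2|=\alpha n$ and $|P_3|=\gamma n$, let $T\subseteq X$ be nonempty, let $\tau>0$, and set $\psi:=\frac1{3\alpha}R_{2\alpha(k+1)\phi_\alpha}(P_2,T)$. Let $F_c:=\mathrm{far}_{4(k+1)\phi_\alpha}(X\setminus P_1,T)$, let $\mathcal{B}_c$ be a $(\phi_\alpha/3)$-linear bin division of $(X\setminus P_1)\setminus F_c$ with respect to $T$, and let $F_d:=\mathrm{far}_{5(k+1)\phi_\alpha}(X\setminus P_1,T)$. Suppose each of $F_c$ and $\mathcal{B}_c$ is trivial or well-represented in $P_2$ for $X\setminus P_1$, and $F_d$ is trivial or well-represented in $P_3$ for $X\setminus P_1$. Let $N:=|\{x\in P_3:\rho(x,T)>\psi/(k\tau)\}|$. Then $$N\le 8(k+1)\phi_\alpha\frac{\gamma}{1-\alpha}+9k\tau.$$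
   Context: Standing setting: $(X,\rho)$ is a finite metric space with $|X|=n$; $k\ge2$ is an integer and $\delta\in(0,1)$; $\log$ is the natural logarithm; for $\alpha>0$, $\phi_\alpha:=150\log(32k/\delta)/\alpha$. For nonempty $T\subseteq X$, $\rho(x,T):=\min_{y\in T}\rho(x,y)$ and $R(S,T):=\sum_{x\in S}\rho(x,T)$; ties are broken by a fixed ordering of $X$. For $S\subseteq X$ and real $r\ge0$, $\mathrm{far}_r(S,T)$ is the set of the $\lceil r\rceil$ points of $S$ furthest from $T$; if $|S|<r$, $\mathrm{far}_r(S,T):=S$ (trivial far set). $R_r(S,T):=R(S\setminus\mathrm{far}_r(S,T),T)$. For finite $W$, $A,B\subseteq W$, $B$ is well-represented in $A$ for $W$ if $|B\cap A|/|B|\in[r/2,\frac32 r]$ with $r=|A|/|W|$; a bin division is well-represented if all its bins are. A $z$-linear bin division ($z>0$) of $W$ with respect to $T$ is a partition $(\mathcal{B}(1),\ldots,\mathcal{B}(L))$ of $W$ with: (1) if $z\le|W|$, $|\mathcal{B}(i)|\ge z(i+1)/2$ for all $i$; otherwise it is trivial, $\mathcal{B}(1):=W$; (2) $|\mathcal{B}(1)|\le\frac52 z$; (3) $|\mathcal{B}(i+1)|/|\mathcal{B}(i)|\le3/2$; (4) $\rho(x,T)\ge\rho(x',T)$ whenever $x\in\mathcal{B}(i)$, $x'\in\mathcal{B}(i+1)$. *)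

theory Defs
  imports Complex_Main
begin

definition finite_metric :: "'a set \<Rightarrow> ('a \<Rightarrow> 'a \<Rightarrow> real) \<Rightarrow> bool" where
  "finite_metric X \<rho> \<longleftrightarrow> finite X \<and>
     (\<forall>x\<in>X. \<forall>y\<in>X. \<rho> x y \<ge> 0 \<and> (\<rho> x y = 0 \<longleftrightarrow> x = y) \<and> \<rho> x y = \<rho> y x) \<and>
     (\<forall>x\<in>X. \<forall>y\<in>X. \<forall>z\<in>X. \<rho> x z \<le> \<rho> x y + \<rho> y z)"

definition distT :: "('a \<Rightarrow> 'a \<Rightarrow> real) \<Rightarrow> 'a \<Rightarrow> 'a set \<Rightarrow> real" where
  "distT \<rho> x T = Min ((\<lambda>y. \<rho> x y) ` T)"

definition RR :: "('a \<Rightarrow> 'a \<Rightarrow> real) \<Rightarrow> 'a set \<Rightarrow> 'a set \<Rightarrow> real" where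
  "RR \<rho> S T = (\<Sum>x\<in>S. distT \<rho> x T)"

definition further :: "('a::linorder \<Rightarrow> 'a \<Rightarrow> real) \<Rightarrow> 'a set \<Rightarrow> 'a \<Rightarrow> 'a \<Rightarrow> bool" where
  "further \<rho> T x y \<longleftrightarrow> distT \<rho> x T > distT \<rho> y T \<or> (distT \<rho> x T = distT \<rho> y T \<and> x < y)"

text \<open>far_r(S,T): the ceil(r) points of S furthest from T; S itself if |S| < r.\<close>
definition far :: "('a::linorder \<Rightarrow> 'a \<Rightarrow> real) \<Rightarrow> real \<Rightarrow> 'a set \<Rightarrow> 'a set \<Rightarrow> 'a set" where
  "far \<rho> r S T = (if real (card S) < r then S
     else {x\<in>S. card {y\<in>S. further \<rho> T y x} < nat \<lceil>r\<rceil>})"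

definition far_trivial :: "real \<Rightarrow> 'a set \<Rightarrow> bool" where
  "far_trivial r S \<longleftrightarrow> real (card S) < r"

definition RR_r :: "('a::linorder \<Rightarrow> 'a \<Rightarrow> real) \<Rightarrow> real \<Rightarrow> 'a set \<Rightarrow> 'a set \<Rightarrow> real" where
  "RR_r \<rho> r S T = RR \<rho> (S - far \<rho> r S T) T"

definition well_represented :: "'a set \<Rightarrow> 'a set \<Rightarrow> 'a set \<Rightarrow> bool" where
  "well_represented W A B \<longleftrightarrow>
     (let r = real (card A) / real (card W);
          q = real (card (B \<inter> A)) / real (card B)
      in r / 2 \<le> q \<and> q \<le> 3 / 2 * r)"

definition bins_well_represented :: "'a set \<Rightarrow> 'a set \<Rightarrow> 'a set list \<Rightarrow> bool" where
  "bins_well_represented W A Bs \<longleftrightarrow> (\<forall>B\<in>set Bs. well_represented W A B)"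

text \<open>z-linear bin division of W w.r.t. T, as a list of bins; list index j
  corresponds to bin B(j+1) of the paper.\<close>
definition linear_bin_division ::
  "('a \<Rightarrow> 'a \<Rightarrow> real) \<Rightarrow> real \<Rightarrow> 'a set \<Rightarrow> 'a set \<Rightarrow> 'a set list \<Rightarrow> bool" where
  "linear_bin_division \<rho> z W T Bs \<longleftrightarrow>
     Bs \<noteq> [] \<and> \<Union>(set Bs) = W \<and>
     (\<forall>i<length Bs. \<forall>j<length Bs. i \<noteq> j \<longrightarrow> Bs ! i \<inter> Bs ! j = {}) \<and>
     (if z \<le> real (card W)
      then (\<forall>j<length Bs. real (card (Bs ! j)) \<ge> z * (real j + 2) / 2)
      else Bs = [W]) \<and>
     real (card (Bs ! 0)) \<le> 5 / 2 * z \<and>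
     (\<forall>j. Suc j < length Bs \<longrightarrow>
        real (card (Bs ! Suc j)) / real (card (Bs ! j)) \<le> 3 / 2) \<and>
     (\<forall>j. Suc j < length Bs \<longrightarrow>
        (\<forall>x\<in>Bs ! j. \<forall>x'\<in>Bs ! Suc j. distT \<rho> x T \<ge> distT \<rho> x' T))"

definition bin_division_trivial :: "real \<Rightarrow> 'a set \<Rightarrow> bool" where
  "bin_division_trivial z W \<longleftrightarrow> \<not> (z \<le> real (card W))"

definition phi :: "nat \<Rightarrow> real \<Rightarrow> real \<Rightarrow> real" where
  "phi k \<delta> \<alpha> = 150 * ln (32 * real k / \<delta>) / \<alpha>"

end

theory Submission
  imports Defs
begin

(*
  Write W = X - P1 and m = (k+1) phi.  The 5m points of W furthest from T are well
  represented in P3, so at most about 8 m gamma/(1-alpha) points of P3 lie among them.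
  Suppose more than 9 k tau points of P3 outside this far set exceed the threshold
  psi/(k tau).  Then so does the whole far set, and together with the roughly m points
  that separate it from the 4m furthest points, more than 9 k tau + m - 1 points of the
  binned set W - far_4m exceed the threshold.  Since the bins are sorted by distance
  and grow at most by the factor 3/2, the bins lying entirely above the threshold
  already contain two thirds of these points up to an additive 5 phi/6, hence more than
  6 k tau points, and as the bins are well represented in P2 more than 3 alpha k tau of
  them lie in P2.  Those points are not among the 4m furthest points of W and therefore
  not among the 2 alpha m furthest points of P2, so they contribute more than
  3 alpha k tau * psi/(k tau) = R_{2 alpha m}(P2,T) to that sum: a contradiction.
*)

lemma further_irrefl: "\<not> further \<rho> T x x"
  by (auto simp: further_def)

lemma further_trans: "further \<rho> T x y \<Longrightarrow> further \<rho> T y z \<Longrightarrow> further \<rho> T x z"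
  by (auto simp: further_def)

lemma further_total: "x \<noteq> y \<Longrightarrow> further \<rho> T x y \<or> further \<rho> T y x"
  by (auto simp: further_def)

lemma further_imp_distT_le: "further \<rho> T x y \<Longrightarrow> distT \<rho> y T \<le> distT \<rho> x T"
  by (auto simp: further_def)

definition further_rank :: "('a::linorder \<Rightarrow> 'a \<Rightarrow> real) \<Rightarrow> 'a set \<Rightarrow> 'a set \<Rightarrow> 'a \<Rightarrow> nat" where
  "further_rank \<rho> T S x = card {y\<in>S. further \<rho> T y x}"

lemma further_rank_less:
  assumes "finite S" "x \<in> S" "further \<rho> T x y"
  shows "further_rank \<rho> T S x < further_rank \<rho> T S y"
proof -
  have "{z\<in>S. further \<rho> T z x} \<subset> {z\<in>S. further \<rho> T z y}"
    using assms further_trans[of \<rho> T _ x y] further_irrefl[of \<rho> T x] by blast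
  then show ?thesis
    unfolding further_rank_def using assms(1) by (simp add: psubset_card_mono)
qed

lemma bij_betw_further_rank:
  assumes "finite S"
  shows "bij_betw (further_rank \<rho> T S) S {..<card S}"
proof -
  have inj: "inj_on (further_rank \<rho> T S) S"
  proof (rule inj_onI)
    fix x y assume "x \<in> S" "y \<in> S" "further_rank \<rho> T S x = further_rank \<rho> T S y"
    then show "x = y"
      using further_rank_less[OF assms, of x \<rho> T y] further_rank_less[OF assms, of y \<rho> T x]
        further_total[of x y \<rho> T] by force
  qed
  have "further_rank \<rho> T S x < card S" if "x \<in> S" for x
  proof -
    have "{z\<in>S. further \<rho> T z x} \<subset> S"
      using that further_irrefl[of \<rho> T x] by blast
    then show ?thesis
      unfolding further_rank_def using assms by (simp add: psubset_card_mono)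
  qed
  then have "further_rank \<rho> T S ` S \<subseteq> {..<card S}"
    by auto
  moreover have "card (further_rank \<rho> T S ` S) = card {..<card S}"
    using card_image[OF inj] by simp
  ultimately show ?thesis
    using inj by (simp add: bij_betw_def card_subset_eq)
qed

lemma far_eq_further_rank:
  "\<not> real (card S) < r \<Longrightarrow> far \<rho> r S T = {x\<in>S. further_rank \<rho> T S x < nat \<lceil>r\<rceil>}"
  by (simp add: far_def further_rank_def)

lemma far_subset: "far \<rho> r S T \<subseteq> S"
  by (auto simp: far_def)

lemma far_mono:
  assumes "r1 \<le> r2"
  shows "far \<rho> r1 S T \<subseteq> far \<rho> r2 S T"
proof -
  have "nat \<lceil>r1\<rceil> \<le> nat \<lceil>r2\<rceil>"
    using assms by (intro nat_mono ceiling_mono)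
  then show ?thesis
    using assms unfolding far_def by (auto intro: less_le_trans)
qed

lemma le_card_if_notin_far:
  "x \<in> S \<Longrightarrow> x \<notin> far \<rho> r S T \<Longrightarrow> r \<le> real (card S)"
  by (auto simp: far_def split: if_splits)

lemma card_far:
  assumes "finite S" "r \<le> real (card S)"
  shows "card (far \<rho> r S T) = nat \<lceil>r\<rceil>"
proof -
  let ?N = "nat \<lceil>r\<rceil>" and ?rk = "further_rank \<rho> T S"
  have bij: "bij_betw ?rk S {..<card S}"
    by (rule bij_betw_further_rank[OF assms(1)])
  have "?N \<le> card S"
    using assms(2) by (simp add: nat_le_iff ceiling_le_iff)
  have "?rk ` {x\<in>S. ?rk x < ?N} = ?rk ` S \<inter> {..<?N}"
    by auto
  also have "\<dots> = {..<?N}"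
    using bij \<open>?N \<le> card S\<close> unfolding bij_betw_def by (simp add: Int_absorb1)
  finally have img: "?rk ` {x\<in>S. ?rk x < ?N} = {..<?N}" .
  have "inj_on ?rk {x\<in>S. ?rk x < ?N}"
    using bij_betw_imp_inj_on[OF bij] by (rule inj_on_subset) blast
  then have "card {x\<in>S. ?rk x < ?N} = ?N"
    using card_image img by fastforce
  then show ?thesis
    using far_eq_further_rank[of S r \<rho> T] assms(2) by simp
qed

lemma further_if_far_notin:
  assumes "finite S" "y \<in> far \<rho> r S T" "x \<in> S" "x \<notin> far \<rho> r S T"
  shows "further \<rho> T y x"
proof -
  have far: "far \<rho> r S T = {x\<in>S. further_rank \<rho> T S x < nat \<lceil>r\<rceil>}"
    using le_card_if_notin_far[OF assms(3,4)] by (intro far_eq_further_rank) simp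
  have "\<not> further \<rho> T x y"
  proof
    assume "further \<rho> T x y"
    then have "further_rank \<rho> T S x < further_rank \<rho> T S y"
      by (rule further_rank_less[OF assms(1,3)])
    moreover have "further_rank \<rho> T S y < nat \<lceil>r\<rceil>"
      using assms(2) unfolding far by blast
    ultimately have "x \<in> far \<rho> r S T"
      using assms(3) unfolding far by simp
    with assms(4) show False ..
  qed
  moreover have "x \<noteq> y"
    using assms by auto
  ultimately show ?thesis
    using further_total[of x y \<rho> T] by blast
qed

lemma distT_le_if_far:
  assumes "finite S" "y \<in> far \<rho> r S T" "x \<in> S - far \<rho> r S T"
  shows "distT \<rho> x T \<le> distT \<rho> y T"
  using assms further_if_far_notin[OF assms(1,2)] by (blast intro: further_imp_distT_le)

lemma notin_far_if_rank_ge: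
  assumes "finite S" "r \<le> real (further_rank \<rho> T S x)"
  shows "x \<notin> far \<rho> r S T"
proof (cases "real (card S) < r")
  case True
  have "further_rank \<rho> T S x \<le> card S"
    unfolding further_rank_def using assms(1) by (intro card_mono) auto
  with True assms(2) show ?thesis
    by linarith
next
  case False
  have "nat \<lceil>r\<rceil> \<le> further_rank \<rho> T S x"
    using assms(2) by (simp add: nat_le_iff ceiling_le_iff)
  then show ?thesis
    unfolding far_eq_further_rank[OF False] by (blast dest: leD)
qed

lemma notin_far_of_subset:
  assumes "finite S" "A \<subseteq> S" "x \<in> A - far \<rho> r S T" "s \<le> real (card (far \<rho> r S T \<inter> A))"
  shows "x \<notin> far \<rho> s A T"
proof (rule notin_far_if_rank_ge)
  show "finite A"
    using assms(1,2) by (rule finite_subset[rotated])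
  have "far \<rho> r S T \<inter> A \<subseteq> {y\<in>A. further \<rho> T y x}"
  proof
    fix y assume "y \<in> far \<rho> r S T \<inter> A"
    moreover have "further \<rho> T y x"
      using calculation assms(2,3) by (intro further_if_far_notin[OF assms(1)]) auto
    ultimately show "y \<in> {y\<in>A. further \<rho> T y x}"
      by simp
  qed
  then have "card (far \<rho> r S T \<inter> A) \<le> further_rank \<rho> T A x"
    unfolding further_rank_def using \<open>finite A\<close> by (intro card_mono) auto
  with assms(4) show "s \<le> real (further_rank \<rho> T A x)"
    by linarith
qed

lemma card_far_diff_gt:
  assumes "finite S" "0 \<le> r1" "r1 \<le> r2" "r2 \<le> real (card S)"
  shows "r2 - r1 - 1 < real (card (far \<rho> r2 S T - far \<rho> r1 S T))"
proof -
  have "finite (far \<rho> r1 S T)"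
    using assms(1) far_subset by (rule finite_subset[rotated])
  then have "card (far \<rho> r2 S T - far \<rho> r1 S T) = card (far \<rho> r2 S T) - card (far \<rho> r1 S T)"
    using far_mono[OF assms(3)] by (rule card_Diff_subset)
  also have "\<dots> = nat \<lceil>r2\<rceil> - nat \<lceil>r1\<rceil>"
    using card_far[OF assms(1), of r1] card_far[OF assms(1,4)] assms(3,4) by simp
  finally have "real (card (far \<rho> r2 S T - far \<rho> r1 S T)) = real (nat \<lceil>r2\<rceil>) - real (nat \<lceil>r1\<rceil>)"
    using nat_mono[OF ceiling_mono[OF assms(3)]] by (simp add: of_nat_diff)
  moreover have "real (nat \<lceil>r1\<rceil>) < r1 + 1"
    using assms(2) ceiling_correct[of r1] by simp
  ultimately show ?thesis
    using real_nat_ceiling_ge[of r2] by linarith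
qed

lemma well_represented_card_ge:
  assumes "well_represented W A B" "a \<le> real (card A) / real (card W)"
  shows "a / 2 * real (card B) \<le> real (card (B \<inter> A))"
proof (cases "card B = 0")
  case False
  note \<open>a \<le> real (card A) / real (card W)\<close>
  also have "real (card A) / real (card W) / 2 \<le> real (card (B \<inter> A)) / real (card B)"
    using assms(1) unfolding well_represented_def Let_def by simp
  finally show ?thesis
    using False by (simp add: le_divide_eq)
qed simp

lemma well_represented_card_le:
  assumes "well_represented W A B" "finite B"
  shows "real (card (B \<inter> A)) \<le> 3 / 2 * (real (card A) / real (card W)) * real (card B)"
proof (cases "B = {}")
  case False
  then have "0 < real (card B)"
    using assms(2) by (simp add: card_gt_0_iff)
  moreover have "real (card (B \<inter> A)) / real (card B) \<le> 3 / 2 * (real (card A) / real (card W))"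
    using assms(1) unfolding well_represented_def Let_def by simp
  ultimately show ?thesis
    by (simp only: pos_divide_le_eq)
qed simp

lemma card_far_inter_le:
  assumes "finite W" "A \<subseteq> W" "0 \<le> r"
    and "far_trivial r W \<or> well_represented W A (far \<rho> r W T)"
  shows "real (card (far \<rho> r W T \<inter> A)) \<le> 3 / 2 * (real (card A) / real (card W)) * (r + 1)"
proof -
  let ?q = "real (card A) / real (card W)"
  show ?thesis
  proof (cases "far_trivial r W")
    case True
    have "far \<rho> r W T \<inter> A = A"
      using True assms(2) by (auto simp: far_def far_trivial_def)
    then have "real (card (far \<rho> r W T \<inter> A)) = ?q * real (card W)"
      using card_mono[OF assms(1,2)] by (cases "card W = 0") auto
    also have "\<dots> \<le> ?q * (3 / 2 * (r + 1))"
      using True unfolding far_trivial_def by (intro mult_left_mono) auto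
    finally show ?thesis
      by (simp only: ac_simps)
  next
    case False
    have "finite (far \<rho> r W T)"
      using assms(1) far_subset by (rule finite_subset[rotated])
    then have "real (card (far \<rho> r W T \<inter> A)) \<le> 3 / 2 * ?q * real (card (far \<rho> r W T))"
      using False assms(4) by (intro well_represented_card_le) auto
    also have "\<dots> \<le> 3 / 2 * ?q * (r + 1)"
      using False card_far[OF assms(1), of r] assms(3) ceiling_correct[of r]
      unfolding far_trivial_def by (intro mult_left_mono) auto
    finally show ?thesis .
  qed
qed

lemma card_far_inter_le_8m:
  assumes "finite W" "A \<subseteq> W" "3 \<le> m"
    and "far_trivial (5 * m) W \<or> well_represented W A (far \<rho> (5 * m) W T)"
  shows "real (card (far \<rho> (5 * m) W T \<inter> A)) \<le> 8 * m * (real (card A) / real (card W))"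
proof -
  let ?q = "real (card A) / real (card W)"
  have "real (card (far \<rho> (5 * m) W T \<inter> A)) \<le> ?q * (3 / 2 * (5 * m + 1))"
    using card_far_inter_le[OF assms(1,2) _ assms(4)] assms(3) by (simp add: ac_simps)
  also have "\<dots> \<le> ?q * (8 * m)"
    using assms(3) by (intro mult_left_mono) auto
  finally show ?thesis
    by (simp only: ac_simps)
qed

lemma twice_le_prefix_sum_if_ratio_bounded:
  fixes b :: "nat \<Rightarrow> real"
  assumes "b 0 \<le> 5 / 2 * z" "\<And>i. Suc i < L \<Longrightarrow> b (Suc i) \<le> 3 / 2 * b i"
  shows "j < L \<Longrightarrow> 2 * b j \<le> (\<Sum>i<j. b i) + 5 * z"
proof (induction j)
  case (Suc j)
  then show ?case
    using assms(2)[of j] by simp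
qed (use assms(1) in simp)

lemma sorted_bins_trans:
  fixes g :: "'a \<Rightarrow> real"
  assumes ne: "\<And>j. j < length Bs \<Longrightarrow> Bs ! j \<noteq> {}"
    and ord: "\<And>j x y. Suc j < length Bs \<Longrightarrow> x \<in> Bs ! j \<Longrightarrow> y \<in> Bs ! Suc j \<Longrightarrow> g y \<le> g x"
  shows "i < j \<Longrightarrow> j < length Bs \<Longrightarrow> x \<in> Bs ! i \<Longrightarrow> y \<in> Bs ! j \<Longrightarrow> g y \<le> g x"
proof (induction j arbitrary: y)
  case (Suc j)
  show ?case
  proof (cases "i = j")
    case False
    obtain w where w: "w \<in> Bs ! j"
      using ne Suc.prems(2) by fastforce
    have "g w \<le> g x"
      using Suc False w by simp
    moreover have "g y \<le> g w"
      using ord Suc.prems w by blast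
    ultimately show ?thesis
      by simp
  qed (use ord Suc.prems in blast)
qed simp

lemma card_UN_prefix_Int:
  assumes "\<forall>B\<in>set Bs. finite B"
    and "\<And>i j. i < length Bs \<Longrightarrow> j < length Bs \<Longrightarrow> i \<noteq> j \<Longrightarrow> Bs ! i \<inter> Bs ! j = {}"
    and "j \<le> length Bs"
  shows "card ((\<Union>i<j. Bs ! i) \<inter> A) = (\<Sum>i<j. card (Bs ! i \<inter> A))"
proof -
  have disj: "\<forall>i\<in>{..<j}. \<forall>i'\<in>{..<j}. i \<noteq> i' \<longrightarrow> (Bs ! i \<inter> A) \<inter> (Bs ! i' \<inter> A) = {}"
  proof (intro ballI impI)
    fix i i' assume "i \<in> {..<j}" "i' \<in> {..<j}" "i \<noteq> i'"
    then have "Bs ! i \<inter> Bs ! i' = {}"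
      using assms(2,3) by simp
    then show "(Bs ! i \<inter> A) \<inter> (Bs ! i' \<inter> A) = {}"
      by blast
  qed
  have "(\<Union>i<j. Bs ! i) \<inter> A = (\<Union>i<j. Bs ! i \<inter> A)"
    by blast
  also have "card \<dots> = (\<Sum>i<j. card (Bs ! i \<inter> A))"
    using assms(1,3) disj by (intro card_UN_disjoint) auto
  finally show ?thesis .
qed

lemma represented_UN_prefix:
  assumes fin: "\<forall>B\<in>set Bs. finite B"
    and disj: "\<And>i j. i < length Bs \<Longrightarrow> j < length Bs \<Longrightarrow> i \<noteq> j \<Longrightarrow> Bs ! i \<inter> Bs ! j = {}"
    and rep: "\<forall>B\<in>set Bs. c * real (card B) \<le> real (card (B \<inter> P))"
    and "j \<le> length Bs"
  shows "c * real (card (\<Union>i<j. Bs ! i)) \<le> real (card ((\<Union>i<j. Bs ! i) \<inter> P))"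
proof -
  have "c * real (card (\<Union>i<j. Bs ! i)) = (\<Sum>i<j. c * real (card (Bs ! i)))"
    using card_UN_prefix_Int[OF fin disj \<open>j \<le> length Bs\<close>, of UNIV] by (simp add: sum_distrib_left)
  also have "\<dots> \<le> (\<Sum>i<j. real (card (Bs ! i \<inter> P)))"
    using rep \<open>j \<le> length Bs\<close> by (intro sum_mono) auto
  also have "\<dots> = real (card ((\<Union>i<j. Bs ! i) \<inter> P))"
    using card_UN_prefix_Int[OF fin disj \<open>j \<le> length Bs\<close>, of P] by simp
  finally show ?thesis .
qed

lemma ordered_bins_threshold:
  fixes Bs :: "'a set list" and g :: "'a \<Rightarrow> real"
  assumes fin: "\<forall>B\<in>set Bs. finite B"
    and disj: "\<And>i j. i < length Bs \<Longrightarrow> j < length Bs \<Longrightarrow> i \<noteq> j \<Longrightarrow> Bs ! i \<inter> Bs ! j = {}"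
    and ord: "\<And>i j x y. i < j \<Longrightarrow> j < length Bs \<Longrightarrow> x \<in> Bs ! i \<Longrightarrow> y \<in> Bs ! j \<Longrightarrow> g y \<le> g x"
    and growth: "\<And>j. j < length Bs \<Longrightarrow>
      2 * real (card (Bs ! j)) \<le> (\<Sum>i<j. real (card (Bs ! i))) + 5 * z"
    and rep: "\<forall>B\<in>set Bs. c * real (card B) \<le> real (card (B \<inter> P))"
    and "0 \<le> z"
  shows "\<exists>Q \<subseteq> \<Union>(set Bs) \<inter> {x. t < g x}. c * real (card Q) \<le> real (card (Q \<inter> P)) \<and>
           real (card (\<Union>(set Bs) \<inter> {x. t < g x})) \<le> 3 / 2 * real (card Q) + 5 / 2 * z"
proof -
  define S where "S = {x. t < g x}"
  define j where "j = length (takeWhile (\<lambda>B. B \<subseteq> S) Bs)"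
  define Q where "Q = (\<Union>i<j. Bs ! i)"
  have "j \<le> length Bs"
    unfolding j_def by (rule length_takeWhile_le)
  have "Bs ! i \<subseteq> S" if "i < j" for i
    using that set_takeWhileD[OF nth_mem, of i "\<lambda>B. B \<subseteq> S" Bs] takeWhile_nth[of i "\<lambda>B. B \<subseteq> S" Bs]
    unfolding j_def by simp
  then have Q_sub: "Q \<subseteq> \<Union>(set Bs) \<inter> S"
    using \<open>j \<le> length Bs\<close> unfolding Q_def by force
  have card_Q: "real (card Q) = (\<Sum>i<j. real (card (Bs ! i)))"
    using card_UN_prefix_Int[OF fin disj \<open>j \<le> length Bs\<close>, of UNIV] unfolding Q_def by simp
  have cover: "\<Union>(set Bs) \<inter> S \<subseteq> Q \<union> (if j < length Bs then Bs ! j else {})"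
  proof
    fix y assume "y \<in> \<Union>(set Bs) \<inter> S"
    then obtain i where i: "i < length Bs" "y \<in> Bs ! i" "t < g y"
      by (auto simp: set_conv_nth S_def)
    have "i \<le> j"
    proof (rule ccontr)
      assume "\<not> i \<le> j"
      then have "j < length Bs"
        using i by simp
      then obtain x where "x \<in> Bs ! j" "\<not> t < g x"
        using nth_length_takeWhile[of "\<lambda>B. B \<subseteq> S" Bs] unfolding j_def S_def by auto
      then show False
        using ord[of j i x y] i \<open>\<not> i \<le> j\<close> by simp
    qed
    then show "y \<in> Q \<union> (if j < length Bs then Bs ! j else {})"
      using i unfolding Q_def by (cases "i = j") auto
  qed
  have "finite (\<Union>(set Bs))"
    using fin by blast
  then have fin_cover: "finite (Q \<union> (if j < length Bs then Bs ! j else {}))"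
    using Q_sub fin by (auto intro: finite_subset)
  have "real (card (\<Union>(set Bs) \<inter> S)) \<le> 3 / 2 * real (card Q) + 5 / 2 * z"
  proof (cases "j < length Bs")
    case True
    have "card (\<Union>(set Bs) \<inter> S) \<le> card Q + card (Bs ! j)"
      using card_mono[OF fin_cover cover] card_Un_le[of Q "Bs ! j"] True by simp
    moreover have "2 * real (card (Bs ! j)) \<le> real (card Q) + 5 * z"
      using growth[OF True] card_Q by simp
    ultimately show ?thesis
      by linarith
  next
    case False
    then show ?thesis
      using card_mono[OF fin_cover cover] \<open>0 \<le> z\<close> by simp
  qed
  then show ?thesis
    using Q_sub represented_UN_prefix[OF fin disj rep \<open>j \<le> length Bs\<close>]
    unfolding S_def Q_def by blast
qed

lemma linear_bin_division_threshold:
  assumes Bs: "linear_bin_division \<rho> z W T Bs" and "finite W" "0 < z" "z \<le> real (card W)"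
    and rep: "\<forall>B\<in>set Bs. c * real (card B) \<le> real (card (B \<inter> P))"
  shows "\<exists>Q \<subseteq> {x\<in>W. t < distT \<rho> x T}. c * real (card Q) \<le> real (card (Q \<inter> P)) \<and>
           real (card {x\<in>W. t < distT \<rho> x T}) \<le> 3 / 2 * real (card Q) + 5 / 2 * z"
proof -
  have U: "\<Union>(set Bs) = W"
    and disj: "\<And>i j. i < length Bs \<Longrightarrow> j < length Bs \<Longrightarrow> i \<noteq> j \<Longrightarrow> Bs ! i \<inter> Bs ! j = {}"
    and size: "\<And>j. j < length Bs \<Longrightarrow> z * (real j + 2) / 2 \<le> real (card (Bs ! j))"
    and first: "real (card (Bs ! 0)) \<le> 5 / 2 * z"
    and ratio: "\<And>j. Suc j < length Bs \<Longrightarrow> real (card (Bs ! Suc j)) / real (card (Bs ! j)) \<le> 3 / 2"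
    and ord: "\<And>j x y. Suc j < length Bs \<Longrightarrow> x \<in> Bs ! j \<Longrightarrow> y \<in> Bs ! Suc j \<Longrightarrow>
                distT \<rho> y T \<le> distT \<rho> x T"
    using Bs \<open>z \<le> real (card W)\<close> unfolding linear_bin_division_def by auto
  have pos: "0 < real (card (Bs ! j))" if "j < length Bs" for j
  proof -
    have "0 < z * (real j + 2) / 2"
      using \<open>0 < z\<close> by simp
    with size[OF that] show ?thesis
      by linarith
  qed
  have fin: "\<forall>B\<in>set Bs. finite B"
    using U \<open>finite W\<close> by (metis Union_upper finite_subset)
  have "2 * real (card (Bs ! j)) \<le> (\<Sum>i<j. real (card (Bs ! i))) + 5 * z" if "j < length Bs" for j
    using twice_le_prefix_sum_if_ratio_bounded[of "\<lambda>i. real (card (Bs ! i))" z "length Bs" j]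
      first ratio pos that by (simp add: divide_le_eq)
  moreover have "\<And>i j x y. i < j \<Longrightarrow> j < length Bs \<Longrightarrow> x \<in> Bs ! i \<Longrightarrow> y \<in> Bs ! j \<Longrightarrow>
                   distT \<rho> y T \<le> distT \<rho> x T"
    using sorted_bins_trans[of Bs "\<lambda>x. distT \<rho> x T"] pos ord by fastforce
  moreover have "\<Union>(set Bs) \<inter> {x. t < distT \<rho> x T} = {x\<in>W. t < distT \<rho> x T}"
    using U by blast
  ultimately show ?thesis
    using ordered_bins_threshold[OF fin disj _ _ rep, of "\<lambda>x. distT \<rho> x T" z t] \<open>0 < z\<close> by simp
qed

lemma represented_subset_above_threshold:
  fixes W P T :: "'a::linorder set"
  assumes W: "finite W" "P \<subseteq> W"
    and radii: "0 \<le> rc" "rc + 5 / 2 * z + 1 \<le> rd" and "0 < z"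
    and Bs: "linear_bin_division \<rho> z (W - far \<rho> rc W T) T Bs"
    and Bs_wr: "bin_division_trivial z (W - far \<rho> rc W T) \<or> bins_well_represented W P Bs"
    and a: "0 < a" "a \<le> real (card P) / real (card W)"
    and "0 \<le> s"
    and many: "9 * s < real (card {x \<in> W - far \<rho> rd W T. t < distT \<rho> x T})"
  shows "\<exists>Q \<subseteq> W - far \<rho> rc W T. (\<forall>x\<in>Q. t < distT \<rho> x T) \<and> 3 * a * s < real (card (Q \<inter> P))"
proof -
  let ?Fc = "far \<rho> rc W T" and ?Fd = "far \<rho> rd W T"
  define H where "H = {x \<in> W - ?Fd. t < distT \<rho> x T}"
  define U where "U = {x \<in> W - ?Fc. t < distT \<rho> x T}"
  have "H \<noteq> {}"
    using many[folded H_def] \<open>0 \<le> s\<close> by auto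
  then obtain x0 where x0: "x0 \<in> W - ?Fd" "t < distT \<rho> x0 T"
    unfolding H_def by blast
  then have "rd \<le> real (card W)"
    using le_card_if_notin_far[of x0 W] by blast
  have "rc \<le> rd"
    using radii \<open>0 < z\<close> by linarith
  have gap: "rd - rc - 1 < real (card (?Fd - ?Fc))"
    using card_far_diff_gt[OF W(1) radii(1) \<open>rc \<le> rd\<close> \<open>rd \<le> real (card W)\<close>] .
  have "?Fd - ?Fc \<subseteq> U"
  proof
    fix y assume y: "y \<in> ?Fd - ?Fc"
    then have "distT \<rho> x0 T \<le> distT \<rho> y T"
      by (intro distT_le_if_far[OF W(1) _ x0(1)]) simp
    with y x0(2) show "y \<in> U"
      using far_subset[of \<rho> rd W T] unfolding U_def by auto
  qed
  moreover have "H \<subseteq> U"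
    using far_mono[OF \<open>rc \<le> rd\<close>] unfolding H_def U_def by blast
  moreover have "finite U"
    using W(1) unfolding U_def by simp
  ultimately have "card (H \<union> (?Fd - ?Fc)) \<le> card U"
    by (intro card_mono) auto
  moreover have "card (H \<union> (?Fd - ?Fc)) = card H + card (?Fd - ?Fc)"
    using W(1) finite_subset[OF far_subset W(1)] unfolding H_def by (intro card_Un_disjoint) auto
  ultimately have UH: "card H + card (?Fd - ?Fc) \<le> card U"
    by simp
  have "card (?Fd - ?Fc) \<le> card (W - ?Fc)"
    using W(1) far_subset[of \<rho> rd W T] by (intro card_mono) auto
  then have z_le: "z \<le> real (card (W - ?Fc))"
    using gap radii by linarith
  then have "bins_well_represented W P Bs"
    using Bs_wr unfolding bin_division_trivial_def by simp
  then have rep: "\<forall>B\<in>set Bs. a / 2 * real (card B) \<le> real (card (B \<inter> P))"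
    using well_represented_card_ge[OF _ a(2)] unfolding bins_well_represented_def by blast
  obtain Q where Q: "Q \<subseteq> U" "a / 2 * real (card Q) \<le> real (card (Q \<inter> P))"
    "real (card U) \<le> 3 / 2 * real (card Q) + 5 / 2 * z"
    using linear_bin_division_threshold[OF Bs _ \<open>0 < z\<close> z_le rep, of t] W(1)
    unfolding U_def by auto
  have "6 * s < real (card Q)"
    using Q(3) UH gap radii many[folded H_def] by linarith
  then have "a / 2 * (6 * s) < a / 2 * real (card Q)"
    using a(1) by (intro mult_strict_left_mono) auto
  then have "3 * a * s < real (card (Q \<inter> P))"
    using Q(2) by linarith
  with Q(1) show ?thesis
    unfolding U_def by blast
qed

lemma card_mult_less_sum:
  fixes f :: "'a \<Rightarrow> real"
  assumes "finite B" "A \<subseteq> B" "A \<noteq> {}" "\<forall>x\<in>A. t < f x" "\<forall>x\<in>B. 0 \<le> f x"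
  shows "real (card A) * t < (\<Sum>x\<in>B. f x)"
proof -
  have "finite A"
    using assms(1,2) by (rule finite_subset[rotated])
  have "real (card A) * t = (\<Sum>x\<in>A. t)"
    by simp
  also have "\<dots> < (\<Sum>x\<in>A. f x)"
    using \<open>finite A\<close> assms(3,4) by (intro sum_strict_mono) auto
  also have "\<dots> \<le> (\<Sum>x\<in>B. f x)"
    using assms by (intro sum_mono2) auto
  finally show ?thesis .
qed

lemma card_above_threshold_outside_far_le:
  fixes W P T :: "'a::linorder set"
  assumes W: "finite W" "P \<subseteq> W"
    and radii: "0 \<le> rc" "rc + 5 / 2 * z + 1 \<le> rd" "rp \<le> a / 2 * rc" and "0 < z"
    and Fc_wr: "far_trivial rc W \<or> well_represented W P (far \<rho> rc W T)"
    and Bs: "linear_bin_division \<rho> z (W - far \<rho> rc W T) T Bs"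
    and Bs_wr: "bin_division_trivial z (W - far \<rho> rc W T) \<or> bins_well_represented W P Bs"
    and a: "0 < a" "a \<le> real (card P) / real (card W)"
    and "0 \<le> s" "0 \<le> t" and nonneg: "\<forall>x\<in>P. 0 \<le> distT \<rho> x T"
    and cost: "RR \<rho> (P - far \<rho> rp P T) T \<le> 3 * a * s * t"
  shows "real (card {x \<in> W - far \<rho> rd W T. t < distT \<rho> x T}) \<le> 9 * s"
proof (rule ccontr)
  let ?Fc = "far \<rho> rc W T"
  assume "\<not> ?thesis"
  then obtain Q where Q: "Q \<subseteq> W - ?Fc" "\<forall>x\<in>Q. t < distT \<rho> x T" "3 * a * s < real (card (Q \<inter> P))"
    using represented_subset_above_threshold[OF W radii(1,2) \<open>0 < z\<close> Bs Bs_wr a \<open>0 \<le> s\<close>, of t]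
    by (auto simp: not_le)
  have "Q \<inter> P \<noteq> {}"
  proof
    assume "Q \<inter> P = {}"
    with Q(3) mult_nonneg_nonneg[OF less_imp_le[OF a(1)] \<open>0 \<le> s\<close>] show False
      by simp
  qed
  then obtain x where "x \<in> W - ?Fc"
    using Q(1) by blast
  then have "rc \<le> real (card W)"
    using le_card_if_notin_far[of x W] by blast
  then have "well_represented W P ?Fc"
    using Fc_wr unfolding far_trivial_def by linarith
  then have "a / 2 * real (card ?Fc) \<le> real (card (?Fc \<inter> P))"
    using well_represented_card_ge[OF _ a(2)] by simp
  moreover have "rc \<le> real (card ?Fc)"
    unfolding card_far[OF W(1) \<open>rc \<le> real (card W)\<close>] by (rule real_nat_ceiling_ge)
  then have "a / 2 * rc \<le> a / 2 * real (card ?Fc)"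
    using a(1) by (intro mult_left_mono) auto
  ultimately have "rp \<le> real (card (?Fc \<inter> P))"
    using radii(3) by linarith
  then have "x \<notin> far \<rho> rp P T" if "x \<in> Q \<inter> P" for x
    using that Q(1) by (intro notin_far_of_subset[OF W]) auto
  then have "Q \<inter> P \<subseteq> P - far \<rho> rp P T"
    by blast
  moreover have "finite P"
    using W by (rule finite_subset[rotated])
  ultimately have "real (card (Q \<inter> P)) * t < RR \<rho> (P - far \<rho> rp P T) T"
    unfolding RR_def using \<open>Q \<inter> P \<noteq> {}\<close> Q(2) nonneg by (intro card_mult_less_sum) auto
  moreover have "3 * a * s * t \<le> real (card (Q \<inter> P)) * t"
    using Q(3) \<open>0 \<le> t\<close> by (intro mult_right_mono) auto
  ultimately show False
    using cost by linarith
qed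

lemma distT_nonneg:
  assumes "finite_metric X \<rho>" "T \<subseteq> X" "T \<noteq> {}" "x \<in> X"
  shows "0 \<le> distT \<rho> x T"
proof -
  have "finite T"
    using assms(1,2) finite_subset unfolding finite_metric_def by blast
  then show ?thesis
    using assms unfolding distT_def finite_metric_def by (subst Min_ge_iff) auto
qed

lemma one_le_phi:
  assumes "1 \<le> k" "0 < \<delta>" "\<delta> \<le> 1" "0 < \<alpha>" "\<alpha> \<le> 150"
  shows "1 \<le> phi k \<delta> \<alpha>"
proof -
  have "exp 1 * \<delta> \<le> exp 1"
    using assms(3) by (simp add: mult_left_le)
  also have "\<dots> \<le> 32 * real k"
    using exp_le assms(1) by simp
  finally have "exp 1 \<le> 32 * real k / \<delta>"
    using assms(2) by (simp add: le_divide_eq)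
  then have "1 \<le> ln (32 * real k / \<delta>)"
    using assms(1,2) by (subst ln_ge_iff) auto
  then show ?thesis
    using assms(4,5) unfolding phi_def by (simp add: le_divide_eq)
qed

lemma card_ratio_Diff:
  assumes "finite X" "X \<noteq> {}" "P \<subseteq> X" "real (card P) = \<alpha> * real (card X)" "\<alpha> < 1"
    and "real (card A) = c * real (card X)"
  shows "real (card A) / real (card (X - P)) = c / (1 - \<alpha>)"
proof -
  have "real (card (X - P)) = (1 - \<alpha>) * real (card X)"
    using card_Diff_subset[OF finite_subset[OF assms(3,1)] assms(3)] card_mono[OF assms(1,3)] assms(4)
    by (simp add: of_nat_diff algebra_simps)
  moreover have "0 < real (card X)"
    using assms(1,2) by (simp add: card_gt_0_iff)
  ultimately show ?thesis
    using assms(5,6) by simp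
qed

lemma card_filter_le_far_split:
  assumes "finite W" "A \<subseteq> W"
  shows "card {x\<in>A. Q x} \<le> card (F \<inter> A) + card {x \<in> W - F. Q x}"
proof -
  have "card {x\<in>A. Q x} \<le> card ((F \<inter> A) \<union> {x \<in> W - F. Q x})"
    using assms by (intro card_mono) (auto intro: finite_subset)
  also have "\<dots> \<le> card (F \<inter> A) + card {x \<in> W - F. Q x}"
    by (rule card_Un_le)
  finally show ?thesis .
qed

theorem lemma9:
  fixes X :: "'a::linorder set" and \<rho> :: "'a \<Rightarrow> 'a \<Rightarrow> real"
    and k :: nat and \<delta> \<alpha> \<gamma> \<tau> :: real
    and P1 P2 P3 T :: "'a set" and Bc :: "'a set list"
  assumes metric: "finite_metric X \<rho>"
    and k: "k \<ge> 2" and \<delta>: "0 < \<delta>" "\<delta> < 1"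
    and \<alpha>: "0 < \<alpha>" "\<alpha> \<le> 1 / 6"
    and \<gamma>: "\<alpha> < \<gamma>" "\<gamma> \<le> 1 - 2 * \<alpha>"
    and int_an: "\<alpha> * real (card X) \<in> \<int>" and int_gn: "\<gamma> * real (card X) \<in> \<int>"
    and P: "P1 \<subseteq> X" "P2 \<subseteq> X" "P3 \<subseteq> X"
    and disj: "P1 \<inter> P2 = {}" "P1 \<inter> P3 = {}" "P2 \<inter> P3 = {}"
    and card_P: "real (card P1) = \<alpha> * real (card X)" "real (card P2) = \<alpha> * real (card X)"
      "real (card P3) = \<gamma> * real (card X)"
    and T: "T \<subseteq> X" "T \<noteq> {}"
    and \<tau>: "\<tau> > 0"
    and Bc: "linear_bin_division \<rho> (phi k \<delta> \<alpha> / 3)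
               ((X - P1) - far \<rho> (4 * (real k + 1) * phi k \<delta> \<alpha>) (X - P1) T) T Bc"
    and Fc_wr: "far_trivial (4 * (real k + 1) * phi k \<delta> \<alpha>) (X - P1) \<or>
               well_represented (X - P1) P2 (far \<rho> (4 * (real k + 1) * phi k \<delta> \<alpha>) (X - P1) T)"
    and Bc_wr: "bin_division_trivial (phi k \<delta> \<alpha> / 3)
                 ((X - P1) - far \<rho> (4 * (real k + 1) * phi k \<delta> \<alpha>) (X - P1) T) \<or>
               bins_well_represented (X - P1) P2 Bc"
    and Fd_wr: "far_trivial (5 * (real k + 1) * phi k \<delta> \<alpha>) (X - P1) \<or>
               well_represented (X - P1) P3 (far \<rho> (5 * (real k + 1) * phi k \<delta> \<alpha>) (X - P1) T)"
  shows "real (card {x\<in>P3. distT \<rho> x T >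
            (1 / (3 * \<alpha>) * RR_r \<rho> (2 * \<alpha> * (real k + 1) * phi k \<delta> \<alpha>) P2 T) / (real k * \<tau>)})
         \<le> 8 * (real k + 1) * phi k \<delta> \<alpha> * (\<gamma> / (1 - \<alpha>)) + 9 * real k * \<tau>"
proof -
  let ?\<phi> = "phi k \<delta> \<alpha>" and ?W = "X - P1"
  define m where "m = (real k + 1) * ?\<phi>"
  have scale: "c * (real k + 1) * ?\<phi> = c * m" for c
    unfolding m_def by simp
  define t where "t = (1 / (3 * \<alpha>) * RR_r \<rho> (2 * \<alpha> * m) P2 T) / (real k * \<tau>)"
  have "finite X"
    using metric unfolding finite_metric_def by blast
  have W_sub: "P2 \<subseteq> ?W" "P3 \<subseteq> ?W"
    using P disj by auto
  have ratio: "real (card P2) / real (card ?W) = \<alpha> / (1 - \<alpha>)"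
      "real (card P3) / real (card ?W) = \<gamma> / (1 - \<alpha>)"
    using card_ratio_Diff[OF \<open>finite X\<close> _ P(1) card_P(1) _ card_P(2)]
      card_ratio_Diff[OF \<open>finite X\<close> _ P(1) card_P(1) _ card_P(3)] T \<alpha> by auto
  have "1 \<le> ?\<phi>"
    using one_le_phi k \<delta> \<alpha> by simp
  have m3: "3 * ?\<phi> \<le> m"
    unfolding m_def using k \<open>1 \<le> ?\<phi>\<close> by (intro mult_right_mono) auto
  have far_P3: "real (card (far \<rho> (5 * m) ?W T \<inter> P3)) \<le> 8 * m * (\<gamma> / (1 - \<alpha>))"
    using card_far_inter_le_8m[OF _ W_sub(2) _ Fd_wr[unfolded scale]] ratio(2) m3 \<open>1 \<le> ?\<phi>\<close> \<open>finite X\<close>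
    by simp
  have nonneg: "\<forall>x\<in>P2. 0 \<le> distT \<rho> x T"
    using distT_nonneg[OF metric T] P(2) by blast
  then have "0 \<le> t"
    unfolding t_def RR_r_def RR_def using \<alpha> \<tau>
    by (intro divide_nonneg_nonneg mult_nonneg_nonneg sum_nonneg) auto
  have "\<alpha> \<le> real (card P2) / real (card ?W)"
    unfolding ratio(1) using \<alpha> by (simp add: field_simps)
  then have "real (card {x \<in> ?W - far \<rho> (5 * m) ?W T. t < distT \<rho> x T}) \<le> 9 * (real k * \<tau>)"
    using m3 \<open>1 \<le> ?\<phi>\<close> \<alpha> \<tau> k \<open>0 \<le> t\<close>
    by (intro card_above_threshold_outside_far_le[where rp = "2 * \<alpha> * m" and a = \<alpha>,
          OF _ W_sub(1) _ _ _ _ Fc_wr[unfolded scale] Bc[unfolded scale]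
          Bc_wr[unfolded scale] _ _ _ _ nonneg])
      (auto simp: t_def RR_r_def \<open>finite X\<close>)
  then show ?thesis
    using card_filter_le_far_split[OF _ W_sub(2),
        where F = "far \<rho> (5 * m) ?W T" and Q = "\<lambda>x. t < distT \<rho> x T"] far_P3 \<open>finite X\<close>
    unfolding t_def scale by simp
qed

end
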